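(* Let $\mathcal C$ be a $\dagger$-compact category with bases. For each object $A$ put $\epsilon_A:=\gamma_A\circ\delta_A^\dagger\circ(1_A\otimes d_A^\dagger):A\otimes A^*\to I$. Then each $(A,\epsilon_A)$ is a $\dagger$-compact structure, and for every object $A$ one has $\epsilon_{A^*}=\epsilon_A\circ\sigma_{A^*,A}$ (as morphisms $A^*\otimes A\to I$, using $(A^* )^*=A$). Consequently $\mathcal C$ is a $\dagger$-compact category.
   Context: A $\dagger$-symmetric monoidal category ($\dagger$-SMC) is a symmetric monoidal category (associativity and unit isomorphisms taken strict, symmetry $\sigma_{A,B}$) with an involutive, identity-on-objects contravariant functor $\dagger$ satisfying $(g\circ f)^\dagger=f^\dagger\circ g^\dagger$, $f^{\dagger\dagger}=f$, $(f\otimes g)^\dagger=f^\dagger\otimes g^\dagger$, $\sigma^\dagger=\sigma^{-1}$. A morphism is unitary if invertible with inverse its dagger. A $\dagger$-Frobenius structure is a co-commutative comonoid $(A,\delta_A:A\to A\otimes A,\gamma_A:A\to I)$ with $\delta_A^\dagger\circ\delta_A=1_A$ and $\delta_A\circ\delta_A^\dagger=(\delta_A^\dagger\otimes 1_A)\circ(1_A\otimes\delta_A)$. For $\dagger$-Frobenius structures on $A$ and $B$, a morphism $f:A\to B$ is a permutation if $\delta_B\circ f=(f\otimes f)\circ\delta_A$, $\gamma_B\circ f=\gamma_A$, and $f$ is unitary. A $\dagger$-compact structure is a pair $(A,\epsilon_A:A\otimes A^*\to I)$ with $(\epsilon_A\otimes 1_A)\circ(1_A\otimes\sigma_{A,A^*})\circ(1_A\otimes\epsilon_A^\dagger)=1_A$.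 A $\dagger$-compact category is a $\dagger$-SMC in which each object $A$ has a $\dagger$-compact structure $(A,\epsilon_A)$ such that $\epsilon_{A^*}=\epsilon_A\circ\sigma_{A^*,A}$. A $\dagger$-compact category with bases is a $\dagger$-SMC in which every object $A$ comes with an object $A^*$ and a $\dagger$-dual Frobenius structure $(A,\delta_A,\gamma_A,d_A:A\to A^* )$ (i.e. $(A,\delta_A,\gamma_A)$ is $\dagger$-Frobenius and $d_A$ is unitary), such that $d_{A^*}=d_A^\dagger$ (in particular $(A^* )^*=A$) and $d_A$ is a permutation with respect to the $\dagger$-Frobenius structures on $A$ and $A^*$. *)

theory Defs
  imports Main
begin

text \<open>Objects are all elements of type 'o; morphisms are the elements of the set c_arr
  of type 'm. Composition c_comp g f means g after f.\<close>

record ('o, 'm) dsmc =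
  c_arr :: "'m set"
  c_dom :: "'m \<Rightarrow> 'o"
  c_cod :: "'m \<Rightarrow> 'o"
  c_comp :: "'m \<Rightarrow> 'm \<Rightarrow> 'm"
  c_id :: "'o \<Rightarrow> 'm"
  c_otensor :: "'o \<Rightarrow> 'o \<Rightarrow> 'o"
  c_tensor :: "'m \<Rightarrow> 'm \<Rightarrow> 'm"
  c_unit :: "'o"
  c_sym :: "'o \<Rightarrow> 'o \<Rightarrow> 'm"
  c_dag :: "'m \<Rightarrow> 'm"

definition c_hom :: "('o, 'm) dsmc \<Rightarrow> 'o \<Rightarrow> 'o \<Rightarrow> 'm set" where
  "c_hom C A B = {f \<in> c_arr C. c_dom C f = A \<and> c_cod C f = B}"

definition is_category :: "('o, 'm) dsmc \<Rightarrow> bool" where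
  "is_category C \<longleftrightarrow>
     (\<forall>A. c_id C A \<in> c_hom C A A) \<and>
     (\<forall>f \<in> c_arr C. \<forall>g \<in> c_arr C. c_cod C f = c_dom C g \<longrightarrow>
        c_comp C g f \<in> c_hom C (c_dom C f) (c_cod C g)) \<and>
     (\<forall>f \<in> c_arr C. \<forall>g \<in> c_arr C. \<forall>h \<in> c_arr C.
        c_cod C f = c_dom C g \<longrightarrow> c_cod C g = c_dom C h \<longrightarrow>
        c_comp C h (c_comp C g f) = c_comp C (c_comp C h g) f) \<and>
     (\<forall>f \<in> c_arr C. c_comp C f (c_id C (c_dom C f)) = f \<and>
                      c_comp C (c_id C (c_cod C f)) f = f)"

definition is_strict_monoidal :: "('o, 'm) dsmc \<Rightarrow> bool" where
  "is_strict_monoidal C \<longleftrightarrow>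
     (\<forall>A B A' B' f g. f \<in> c_hom C A B \<longrightarrow> g \<in> c_hom C A' B' \<longrightarrow>
        c_tensor C f g \<in> c_hom C (c_otensor C A A') (c_otensor C B B')) \<and>
     (\<forall>A B. c_tensor C (c_id C A) (c_id C B) = c_id C (c_otensor C A B)) \<and>
     (\<forall>f \<in> c_arr C. \<forall>g \<in> c_arr C. \<forall>f' \<in> c_arr C. \<forall>g' \<in> c_arr C.
        c_cod C f = c_dom C g \<longrightarrow> c_cod C f' = c_dom C g' \<longrightarrow>
        c_comp C (c_tensor C g g') (c_tensor C f f') =
        c_tensor C (c_comp C g f) (c_comp C g' f')) \<and>
     (\<forall>A B D. c_otensor C (c_otensor C A B) D = c_otensor C A (c_otensor C B D)) \<and>
     (\<forall>f \<in> c_arr C. \<forall>g \<in> c_arr C. \<forall>h \<in> c_arr C.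
        c_tensor C (c_tensor C f g) h = c_tensor C f (c_tensor C g h)) \<and>
     (\<forall>A. c_otensor C (c_unit C) A = A \<and> c_otensor C A (c_unit C) = A) \<and>
     (\<forall>f \<in> c_arr C. c_tensor C (c_id C (c_unit C)) f = f \<and>
                      c_tensor C f (c_id C (c_unit C)) = f)"

definition is_symmetric :: "('o, 'm) dsmc \<Rightarrow> bool" where
  "is_symmetric C \<longleftrightarrow>
     (\<forall>A B. c_sym C A B \<in> c_hom C (c_otensor C A B) (c_otensor C B A)) \<and>
     (\<forall>A A' B B' f g. f \<in> c_hom C A A' \<longrightarrow> g \<in> c_hom C B B' \<longrightarrow>
        c_comp C (c_sym C A' B') (c_tensor C f g) = c_comp C (c_tensor C g f) (c_sym C A B)) \<and>
     (\<forall>A B. c_comp C (c_sym C B A) (c_sym C A B) = c_id C (c_otensor C A B)) \<and>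
     (\<forall>A B D. c_sym C A (c_otensor C B D) =
        c_comp C (c_tensor C (c_id C B) (c_sym C A D)) (c_tensor C (c_sym C A B) (c_id C D))) \<and>
     (\<forall>A. c_sym C A (c_unit C) = c_id C A)"

definition is_dagger :: "('o, 'm) dsmc \<Rightarrow> bool" where
  "is_dagger C \<longleftrightarrow>
     (\<forall>A B f. f \<in> c_hom C A B \<longrightarrow> c_dag C f \<in> c_hom C B A) \<and>
     (\<forall>f \<in> c_arr C. \<forall>g \<in> c_arr C. c_cod C f = c_dom C g \<longrightarrow>
        c_dag C (c_comp C g f) = c_comp C (c_dag C f) (c_dag C g)) \<and>
     (\<forall>f \<in> c_arr C. c_dag C (c_dag C f) = f) \<and>
     (\<forall>f \<in> c_arr C. \<forall>g \<in> c_arr C.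
        c_dag C (c_tensor C f g) = c_tensor C (c_dag C f) (c_dag C g)) \<and>
     (\<forall>A B. c_dag C (c_sym C A B) = c_sym C B A)"

definition is_dagger_smc :: "('o, 'm) dsmc \<Rightarrow> bool" where
  "is_dagger_smc C \<longleftrightarrow> is_category C \<and> is_strict_monoidal C \<and> is_symmetric C \<and> is_dagger C"

definition unitary :: "('o, 'm) dsmc \<Rightarrow> 'm \<Rightarrow> bool" where
  "unitary C f \<longleftrightarrow> f \<in> c_arr C \<and>
     c_comp C (c_dag C f) f = c_id C (c_dom C f) \<and>
     c_comp C f (c_dag C f) = c_id C (c_cod C f)"

definition dagger_frobenius :: "('o, 'm) dsmc \<Rightarrow> 'o \<Rightarrow> 'm \<Rightarrow> 'm \<Rightarrow> bool" where
  "dagger_frobenius C A \<delta> \<gamma> \<longleftrightarrow>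
     \<delta> \<in> c_hom C A (c_otensor C A A) \<and> \<gamma> \<in> c_hom C A (c_unit C) \<and>
     c_comp C (c_tensor C \<delta> (c_id C A)) \<delta> = c_comp C (c_tensor C (c_id C A) \<delta>) \<delta> \<and>
     c_comp C (c_tensor C \<gamma> (c_id C A)) \<delta> = c_id C A \<and>
     c_comp C (c_tensor C (c_id C A) \<gamma>) \<delta> = c_id C A \<and>
     c_comp C (c_sym C A A) \<delta> = \<delta> \<and>
     c_comp C (c_dag C \<delta>) \<delta> = c_id C A \<and>
     c_comp C \<delta> (c_dag C \<delta>) = c_comp C (c_tensor C (c_dag C \<delta>) (c_id C A)) (c_tensor C (c_id C A) \<delta>)"

definition is_permutation ::
  "('o, 'm) dsmc \<Rightarrow> 'o \<Rightarrow> 'm \<Rightarrow> 'm \<Rightarrow> 'o \<Rightarrow> 'm \<Rightarrow> 'm \<Rightarrow> 'm \<Rightarrow> bool" where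
  "is_permutation C A \<delta>A \<gamma>A B \<delta>B \<gamma>B f \<longleftrightarrow>
     f \<in> c_hom C A B \<and>
     c_comp C \<delta>B f = c_comp C (c_tensor C f f) \<delta>A \<and>
     c_comp C \<gamma>B f = \<gamma>A \<and>
     unitary C f"

definition dagger_compact_structure :: "('o, 'm) dsmc \<Rightarrow> 'o \<Rightarrow> 'o \<Rightarrow> 'm \<Rightarrow> bool" where
  "dagger_compact_structure C A Astar \<epsilon> \<longleftrightarrow>
     \<epsilon> \<in> c_hom C (c_otensor C A Astar) (c_unit C) \<and>
     c_comp C (c_tensor C \<epsilon> (c_id C A))
        (c_comp C (c_tensor C (c_id C A) (c_sym C A Astar))
                  (c_tensor C (c_id C A) (c_dag C \<epsilon>))) = c_id C A"

definition dagger_compact_category ::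
  "('o, 'm) dsmc \<Rightarrow> ('o \<Rightarrow> 'o) \<Rightarrow> ('o \<Rightarrow> 'm) \<Rightarrow> bool" where
  "dagger_compact_category C star eps \<longleftrightarrow> is_dagger_smc C \<and>
     (\<forall>A. dagger_compact_structure C A (star A) (eps A)) \<and>
     (\<forall>A. eps (star A) = c_comp C (eps A) (c_sym C (star A) A))"

definition dagger_compact_with_bases ::
  "('o, 'm) dsmc \<Rightarrow> ('o \<Rightarrow> 'o) \<Rightarrow> ('o \<Rightarrow> 'm) \<Rightarrow> ('o \<Rightarrow> 'm) \<Rightarrow> ('o \<Rightarrow> 'm) \<Rightarrow> bool" where
  "dagger_compact_with_bases C star \<delta> \<gamma> d \<longleftrightarrow> is_dagger_smc C \<and>
     (\<forall>A. dagger_frobenius C A (\<delta> A) (\<gamma> A) \<and>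
          d A \<in> c_hom C A (star A) \<and> unitary C (d A) \<and>
          star (star A) = A \<and>
          d (star A) = c_dag C (d A) \<and>
          is_permutation C A (\<delta> A) (\<gamma> A) (star A) (\<delta> (star A)) (\<gamma> (star A)) (d A))"

end

theory Submission imports Defs begin

(* A dagger-Frobenius structure (A, delta, gamma) makes A self-dual: the
   "cap" gamma o delta^dagger : A (x) A -> I is invariant under the symmetry and satisfies
   the snake equation (cap (x) 1)(1 (x) cap^dagger) = 1, by the Frobenius law and the
   counit laws.  Twisting such a symmetric self-duality by any unitary u : A -> B gives
   a dagger-compact structure cap o (1 (x) u^dagger) on (A, B).  Moreover a permutation
   f : A -> B carries the cap of A to the cap of B, which yields the swap law relating
   the twisted caps of (A, f) and (B, f^dagger). *)

locale dagger_smc =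
  fixes C :: "('o, 'm) dsmc"
  assumes dsmc: "is_dagger_smc C"
begin

abbreviation arr where "arr \<equiv> c_arr C"
abbreviation dm where "dm \<equiv> c_dom C"
abbreviation cd where "cd \<equiv> c_cod C"
abbreviation idm where "idm \<equiv> c_id C"
abbreviation U where "U \<equiv> c_unit C"
abbreviation \<sigma> where "\<sigma> \<equiv> c_sym C"
abbreviation cmp (infixr "\<cdot>" 55) where "g \<cdot> f \<equiv> c_comp C g f"
abbreviation tns (infixr "\<otimes>" 60) where "f \<otimes> g \<equiv> c_tensor C f g"
abbreviation otns (infixr "\<odot>" 60) where "A \<odot> B \<equiv> c_otensor C A B"
abbreviation dag ("_\<^sup>\<dagger>" [1000] 1000) where "f\<^sup>\<dagger> \<equiv> c_dag C f"

lemma cat: "is_category C" and mon: "is_strict_monoidal C"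
  and sym: "is_symmetric C" and dagger: "is_dagger C"
  using dsmc unfolding is_dagger_smc_def by auto

lemma id_arr [simp]: "idm A \<in> arr" and dm_id [simp]: "dm (idm A) = A"
  and cd_id [simp]: "cd (idm A) = A"
  using cat unfolding is_category_def c_hom_def by auto

lemma comp_arr [simp]: "f \<in> arr \<Longrightarrow> g \<in> arr \<Longrightarrow> cd f = dm g \<Longrightarrow> g \<cdot> f \<in> arr"
  and dm_comp [simp]: "f \<in> arr \<Longrightarrow> g \<in> arr \<Longrightarrow> cd f = dm g \<Longrightarrow> dm (g \<cdot> f) = dm f"
  and cd_comp [simp]: "f \<in> arr \<Longrightarrow> g \<in> arr \<Longrightarrow> cd f = dm g \<Longrightarrow> cd (g \<cdot> f) = cd g"
  using cat unfolding is_category_def c_hom_def by auto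

lemma assoc:
  "f \<in> arr \<Longrightarrow> g \<in> arr \<Longrightarrow> h \<in> arr \<Longrightarrow> cd f = dm g \<Longrightarrow> cd g = dm h \<Longrightarrow>
   (h \<cdot> g) \<cdot> f = h \<cdot> (g \<cdot> f)"
  using cat unfolding is_category_def by metis

lemma comp_id_right [simp]: "f \<in> arr \<Longrightarrow> dm f = A \<Longrightarrow> f \<cdot> idm A = f"
  and comp_id_left [simp]: "f \<in> arr \<Longrightarrow> cd f = A \<Longrightarrow> idm A \<cdot> f = f"
  using cat unfolding is_category_def by auto

lemma tensor_arr [simp]: "f \<in> arr \<Longrightarrow> g \<in> arr \<Longrightarrow> f \<otimes> g \<in> arr"
  and dm_tensor [simp]: "f \<in> arr \<Longrightarrow> g \<in> arr \<Longrightarrow> dm (f \<otimes> g) = dm f \<odot> dm g"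
  and cd_tensor [simp]: "f \<in> arr \<Longrightarrow> g \<in> arr \<Longrightarrow> cd (f \<otimes> g) = cd f \<odot> cd g"
  using mon unfolding is_strict_monoidal_def c_hom_def by auto

lemma tensor_id [simp]: "idm A \<otimes> idm B = idm (A \<odot> B)"
  using mon unfolding is_strict_monoidal_def by auto

lemma interchange:
  "f \<in> arr \<Longrightarrow> g \<in> arr \<Longrightarrow> f' \<in> arr \<Longrightarrow> g' \<in> arr \<Longrightarrow> cd f = dm g \<Longrightarrow> cd f' = dm g' \<Longrightarrow>
   (g \<otimes> g') \<cdot> (f \<otimes> f') = (g \<cdot> f) \<otimes> (g' \<cdot> f')"
  using mon unfolding is_strict_monoidal_def by auto

lemma otensor_assoc [simp]: "(A \<odot> B) \<odot> D = A \<odot> (B \<odot> D)"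
  using mon unfolding is_strict_monoidal_def by auto

lemma tensor_assoc [simp]:
  "f \<in> arr \<Longrightarrow> g \<in> arr \<Longrightarrow> h \<in> arr \<Longrightarrow> (f \<otimes> g) \<otimes> h = f \<otimes> (g \<otimes> h)"
  using mon unfolding is_strict_monoidal_def by auto

lemma sym_arr [simp]: "\<sigma> A B \<in> arr" and dm_sym [simp]: "dm (\<sigma> A B) = A \<odot> B"
  and cd_sym [simp]: "cd (\<sigma> A B) = B \<odot> A"
  using sym unfolding is_symmetric_def c_hom_def by auto

lemma sym_natural:
  "f \<in> arr \<Longrightarrow> g \<in> arr \<Longrightarrow> \<sigma> (cd f) (cd g) \<cdot> (f \<otimes> g) = (g \<otimes> f) \<cdot> \<sigma> (dm f) (dm g)"
  using sym unfolding is_symmetric_def c_hom_def by auto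

lemma dag_arr [simp]: "f \<in> arr \<Longrightarrow> f\<^sup>\<dagger> \<in> arr" and dm_dag [simp]: "f \<in> arr \<Longrightarrow> dm (f\<^sup>\<dagger>) = cd f"
  and cd_dag [simp]: "f \<in> arr \<Longrightarrow> cd (f\<^sup>\<dagger>) = dm f"
  using dagger unfolding is_dagger_def c_hom_def by auto

lemma dag_comp [simp]: "f \<in> arr \<Longrightarrow> g \<in> arr \<Longrightarrow> cd f = dm g \<Longrightarrow> (g \<cdot> f)\<^sup>\<dagger> = f\<^sup>\<dagger> \<cdot> g\<^sup>\<dagger>"
  and dag_dag [simp]: "f \<in> arr \<Longrightarrow> f\<^sup>\<dagger>\<^sup>\<dagger> = f"
  and dag_tensor [simp]: "f \<in> arr \<Longrightarrow> g \<in> arr \<Longrightarrow> (f \<otimes> g)\<^sup>\<dagger> = f\<^sup>\<dagger> \<otimes> g\<^sup>\<dagger>"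
  and dag_sym [simp]: "(\<sigma> A B)\<^sup>\<dagger> = \<sigma> B A"
  using dagger unfolding is_dagger_def by auto

lemma dag_id [simp]: "(idm A)\<^sup>\<dagger> = idm A"
proof -
  have e: "(idm A)\<^sup>\<dagger> = idm A \<cdot> (idm A)\<^sup>\<dagger>" by simp
  have "(idm A)\<^sup>\<dagger>\<^sup>\<dagger> = (idm A \<cdot> (idm A)\<^sup>\<dagger>)\<^sup>\<dagger>" using e by (rule arg_cong)
  also have "\<dots> = (idm A)\<^sup>\<dagger>\<^sup>\<dagger> \<cdot> (idm A)\<^sup>\<dagger>" by (rule dag_comp) simp_all
  also have "\<dots> = idm A \<cdot> (idm A)\<^sup>\<dagger>" by simp
  also have "\<dots> = (idm A)\<^sup>\<dagger>" using e by simp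
  finally show ?thesis by simp
qed

lemma id_tensor_comp:
  "x \<in> arr \<Longrightarrow> y \<in> arr \<Longrightarrow> cd y = dm x \<Longrightarrow> idm B \<otimes> (x \<cdot> y) = (idm B \<otimes> x) \<cdot> (idm B \<otimes> y)"
  using interchange[of "idm B" "idm B" y x] by simp

lemma comp_tensor_id:
  "x \<in> arr \<Longrightarrow> y \<in> arr \<Longrightarrow> cd y = dm x \<Longrightarrow> (x \<cdot> y) \<otimes> idm B = (x \<otimes> idm B) \<cdot> (y \<otimes> idm B)"
  using interchange[of y x "idm B" "idm B"] by simp

lemma unitary_cancel:
  assumes "u \<in> c_hom C A B" and "unitary C u"
  shows "u\<^sup>\<dagger> \<cdot> u = idm A" and "u \<cdot> u\<^sup>\<dagger> = idm B"
  using assms unfolding unitary_def c_hom_def by auto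

definition frobenius_cap :: "'m \<Rightarrow> 'm \<Rightarrow> 'm" where
  "frobenius_cap \<delta> \<gamma> = \<gamma> \<cdot> \<delta>\<^sup>\<dagger>"

lemma frobenius_typing:
  assumes "dagger_frobenius C A \<delta> \<gamma>"
  shows "\<delta> \<in> arr" "dm \<delta> = A" "cd \<delta> = A \<odot> A" "\<gamma> \<in> arr" "dm \<gamma> = A" "cd \<gamma> = U"
  using assms unfolding dagger_frobenius_def c_hom_def by auto

lemma frobenius_cap_hom:
  assumes "dagger_frobenius C A \<delta> \<gamma>"
  shows "frobenius_cap \<delta> \<gamma> \<in> c_hom C (A \<odot> A) U"
  using frobenius_typing[OF assms] unfolding frobenius_cap_def c_hom_def by simp

text \<open>Cocommutativity of \<open>\<delta>\<close> makes the cap symmetric.\<close>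

lemma frobenius_cap_symmetric:
  assumes F: "dagger_frobenius C A \<delta> \<gamma>"
  shows "frobenius_cap \<delta> \<gamma> \<cdot> \<sigma> A A = frobenius_cap \<delta> \<gamma>"
proof -
  note types [simp] = frobenius_typing[OF F]
  have "\<delta>\<^sup>\<dagger> \<cdot> \<sigma> A A = (\<sigma> A A \<cdot> \<delta>)\<^sup>\<dagger>" by simp
  also have "\<dots> = \<delta>\<^sup>\<dagger>" using F unfolding dagger_frobenius_def by simp
  finally show ?thesis unfolding frobenius_cap_def by (simp add: assoc)
qed

text \<open>The snake equation for the cap: by the Frobenius law the middle of the
  zig-zag becomes \<open>\<delta> \<cdot> \<delta>\<^sup>\<dagger>\<close>, and the two counit laws remove the rest.\<close>

lemma frobenius_cap_snake:
  assumes F: "dagger_frobenius C A \<delta> \<gamma>"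
  shows "(frobenius_cap \<delta> \<gamma> \<otimes> idm A) \<cdot> (idm A \<otimes> (frobenius_cap \<delta> \<gamma>)\<^sup>\<dagger>) = idm A"
proof -
  note types [simp] = frobenius_typing[OF F]
  have frob: "(\<delta>\<^sup>\<dagger> \<otimes> idm A) \<cdot> (idm A \<otimes> \<delta>) = \<delta> \<cdot> \<delta>\<^sup>\<dagger>"
    and counit_left: "(\<gamma> \<otimes> idm A) \<cdot> \<delta> = idm A"
    and counit_right: "(idm A \<otimes> \<gamma>) \<cdot> \<delta> = idm A"
    using F unfolding dagger_frobenius_def by auto
  have counit_right_dag: "\<delta>\<^sup>\<dagger> \<cdot> (idm A \<otimes> \<gamma>\<^sup>\<dagger>) = idm A"
    using arg_cong[OF counit_right, of dag] by simp
  have "(frobenius_cap \<delta> \<gamma> \<otimes> idm A) \<cdot> (idm A \<otimes> (frobenius_cap \<delta> \<gamma>)\<^sup>\<dagger>)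
      = ((\<gamma> \<otimes> idm A) \<cdot> (\<delta>\<^sup>\<dagger> \<otimes> idm A)) \<cdot> ((idm A \<otimes> \<delta>) \<cdot> (idm A \<otimes> \<gamma>\<^sup>\<dagger>))"
    unfolding frobenius_cap_def by (simp add: comp_tensor_id id_tensor_comp)
  also have "\<dots> = (\<gamma> \<otimes> idm A) \<cdot> (((\<delta>\<^sup>\<dagger> \<otimes> idm A) \<cdot> (idm A \<otimes> \<delta>)) \<cdot> (idm A \<otimes> \<gamma>\<^sup>\<dagger>))"
    by (simp add: assoc)
  also have "\<dots> = ((\<gamma> \<otimes> idm A) \<cdot> \<delta>) \<cdot> (\<delta>\<^sup>\<dagger> \<cdot> (idm A \<otimes> \<gamma>\<^sup>\<dagger>))"
    unfolding frob by (simp add: assoc)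
  also have "\<dots> = idm A" unfolding counit_left counit_right_dag by simp
  finally show ?thesis .
qed

text \<open>Twisting a symmetric self-duality of A by a unitary \<open>u : A \<rightarrow> B\<close> yields a
  dagger-compact structure on (A, B): the unitary cancels inside the zig-zag.\<close>

lemma twisted_cap_compact_structure:
  assumes cap: "cap \<in> c_hom C (A \<odot> A) U"
    and cap_sym: "cap \<cdot> \<sigma> A A = cap"
    and snake: "(cap \<otimes> idm A) \<cdot> (idm A \<otimes> cap\<^sup>\<dagger>) = idm A"
    and u: "u \<in> c_hom C A B" and unitary: "unitary C u"
  shows "dagger_compact_structure C A B (cap \<cdot> (idm A \<otimes> u\<^sup>\<dagger>))"
proof -
  have types [simp]: "cap \<in> arr" "dm cap = A \<odot> A" "cd cap = U" "u \<in> arr" "dm u = A" "cd u = B"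
    using cap u unfolding c_hom_def by auto
  define \<epsilon> where "\<epsilon> = cap \<cdot> (idm A \<otimes> u\<^sup>\<dagger>)"
  have cap_dag_sym: "\<sigma> A A \<cdot> cap\<^sup>\<dagger> = cap\<^sup>\<dagger>"
    using arg_cong[OF cap_sym, of dag] by simp
  have swap_u: "\<sigma> A B \<cdot> (idm A \<otimes> u) = (u \<otimes> idm A) \<cdot> \<sigma> A A"
    using sym_natural[of "idm A" u] by simp
  have right: "(idm A \<otimes> \<sigma> A B) \<cdot> (idm A \<otimes> \<epsilon>\<^sup>\<dagger>) = idm A \<otimes> ((u \<otimes> idm A) \<cdot> cap\<^sup>\<dagger>)"
  proof -
    have "\<sigma> A B \<cdot> \<epsilon>\<^sup>\<dagger> = (\<sigma> A B \<cdot> (idm A \<otimes> u)) \<cdot> cap\<^sup>\<dagger>"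
      unfolding \<epsilon>_def by (simp add: assoc)
    also have "\<dots> = (u \<otimes> idm A) \<cdot> cap\<^sup>\<dagger>"
      unfolding swap_u by (simp add: assoc cap_dag_sym)
    finally show ?thesis unfolding \<epsilon>_def by (simp add: id_tensor_comp[symmetric])
  qed
  have cancel: "(idm A \<otimes> (u\<^sup>\<dagger> \<otimes> idm A)) \<cdot> (idm A \<otimes> (u \<otimes> idm A)) = idm (A \<odot> A \<odot> A)"
    using unitary_cancel[OF u unitary]
    by (simp add: id_tensor_comp[symmetric] comp_tensor_id[symmetric])
  have "(\<epsilon> \<otimes> idm A) \<cdot> ((idm A \<otimes> \<sigma> A B) \<cdot> (idm A \<otimes> \<epsilon>\<^sup>\<dagger>))
      = (\<epsilon> \<otimes> idm A) \<cdot> (idm A \<otimes> ((u \<otimes> idm A) \<cdot> cap\<^sup>\<dagger>))"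
    by (simp only: right)
  also have "\<dots> = (cap \<otimes> idm A) \<cdot> ((idm A \<otimes> (u\<^sup>\<dagger> \<otimes> idm A)) \<cdot> ((idm A \<otimes> (u \<otimes> idm A)) \<cdot> (idm A \<otimes> cap\<^sup>\<dagger>)))"
    unfolding \<epsilon>_def by (simp add: comp_tensor_id id_tensor_comp assoc)
  also have "\<dots> = (cap \<otimes> idm A) \<cdot> (idm A \<otimes> cap\<^sup>\<dagger>)"
    using cancel by (simp add: assoc[symmetric])
  finally show ?thesis
    using snake unfolding dagger_compact_structure_def \<epsilon>_def c_hom_def by simp
qed

lemma permutation_transports_cap:
  assumes FA: "dagger_frobenius C A \<delta>A \<gamma>A" and FB: "dagger_frobenius C B \<delta>B \<gamma>B"
    and P: "is_permutation C A \<delta>A \<gamma>A B \<delta>B \<gamma>B f"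
  shows "frobenius_cap \<delta>B \<gamma>B = frobenius_cap \<delta>A \<gamma>A \<cdot> (f\<^sup>\<dagger> \<otimes> f\<^sup>\<dagger>)"
proof -
  note types_A [simp] = frobenius_typing[OF FA] and types_B [simp] = frobenius_typing[OF FB]
  have f: "f \<in> c_hom C A B" and comult: "\<delta>B \<cdot> f = (f \<otimes> f) \<cdot> \<delta>A"
    and counit: "\<gamma>B \<cdot> f = \<gamma>A" and unit: "unitary C f"
    using P unfolding is_permutation_def by auto
  have types_f [simp]: "f \<in> arr" "dm f = A" "cd f = B" using f unfolding c_hom_def by auto
  note inv = unitary_cancel[OF f unit]
  have gamma: "\<gamma>B = \<gamma>A \<cdot> f\<^sup>\<dagger>"
  proof -
    have "\<gamma>B = \<gamma>B \<cdot> (f \<cdot> f\<^sup>\<dagger>)" using inv by simp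
    also have "\<dots> = \<gamma>A \<cdot> f\<^sup>\<dagger>" by (simp add: assoc[symmetric] counit)
    finally show ?thesis .
  qed
  have delta: "f\<^sup>\<dagger> \<cdot> \<delta>B\<^sup>\<dagger> = \<delta>A\<^sup>\<dagger> \<cdot> (f\<^sup>\<dagger> \<otimes> f\<^sup>\<dagger>)"
    using arg_cong[OF comult, of dag] by simp
  have "frobenius_cap \<delta>B \<gamma>B = \<gamma>A \<cdot> (f\<^sup>\<dagger> \<cdot> \<delta>B\<^sup>\<dagger>)"
    unfolding frobenius_cap_def gamma by (simp add: assoc)
  also have "\<dots> = frobenius_cap \<delta>A \<gamma>A \<cdot> (f\<^sup>\<dagger> \<otimes> f\<^sup>\<dagger>)"
    unfolding delta frobenius_cap_def by (simp add: assoc)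
  finally show ?thesis .
qed

text \<open>This is the coherence law between the
  compact structures on A and on its dual.\<close>

lemma permutation_twisted_cap_swap:
  assumes FA: "dagger_frobenius C A \<delta>A \<gamma>A" and FB: "dagger_frobenius C B \<delta>B \<gamma>B"
    and P: "is_permutation C A \<delta>A \<gamma>A B \<delta>B \<gamma>B f"
  shows "frobenius_cap \<delta>B \<gamma>B \<cdot> (idm B \<otimes> f) = (frobenius_cap \<delta>A \<gamma>A \<cdot> (idm A \<otimes> f\<^sup>\<dagger>)) \<cdot> \<sigma> B A"
proof -
  define cap where "cap = frobenius_cap \<delta>A \<gamma>A"
  have types [simp]: "cap \<in> arr" "dm cap = A \<odot> A" "cd cap = U"
    using frobenius_cap_hom[OF FA] unfolding cap_def c_hom_def by auto
  have f: "f \<in> c_hom C A B" and unit: "unitary C f"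
    using P unfolding is_permutation_def by auto
  have types_f [simp]: "f \<in> arr" "dm f = A" "cd f = B" using f unfolding c_hom_def by auto
  note inv = unitary_cancel[OF f unit]
  have swap: "\<sigma> A A \<cdot> (f\<^sup>\<dagger> \<otimes> idm A) = (idm A \<otimes> f\<^sup>\<dagger>) \<cdot> \<sigma> B A"
    using sym_natural[of "f\<^sup>\<dagger>" "idm A"] by simp
  have "frobenius_cap \<delta>B \<gamma>B \<cdot> (idm B \<otimes> f) = cap \<cdot> ((f\<^sup>\<dagger> \<otimes> f\<^sup>\<dagger>) \<cdot> (idm B \<otimes> f))"
    unfolding permutation_transports_cap[OF FA FB P] cap_def[symmetric] by (simp add: assoc)
  also have "\<dots> = cap \<cdot> (f\<^sup>\<dagger> \<otimes> idm A)" using inv by (simp add: interchange)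
  also have "\<dots> = (cap \<cdot> \<sigma> A A) \<cdot> (f\<^sup>\<dagger> \<otimes> idm A)"
    unfolding cap_def frobenius_cap_symmetric[OF FA] ..
  also have "\<dots> = (cap \<cdot> (idm A \<otimes> f\<^sup>\<dagger>)) \<cdot> \<sigma> B A" by (simp add: assoc swap)
  finally show ?thesis unfolding cap_def .
qed

end

theorem mainTheorem4:
  fixes C :: "('o, 'm) dsmc" and star :: "'o \<Rightarrow> 'o"
    and \<delta> \<gamma> d :: "'o \<Rightarrow> 'm" and eps :: "'o \<Rightarrow> 'm"
  assumes "dagger_compact_with_bases C star \<delta> \<gamma> d"
    and "\<And>A. eps A = c_comp C (\<gamma> A)
                 (c_comp C (c_dag C (\<delta> A)) (c_tensor C (c_id C A) (c_dag C (d A))))"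
  shows "(\<forall>A. dagger_compact_structure C A (star A) (eps A)) \<and>
         (\<forall>A. eps (star A) = c_comp C (eps A) (c_sym C (star A) A)) \<and>
         dagger_compact_category C star eps"
proof -
  have smc: "is_dagger_smc C" using assms(1) unfolding dagger_compact_with_bases_def by simp
  interpret dagger_smc C by (rule dagger_smc.intro[OF smc])
  have frob: "dagger_frobenius C A (\<delta> A) (\<gamma> A)"
    and d: "d A \<in> c_hom C A (star A)" "unitary C (d A)"
    and dual: "star (star A) = A" "d (star A) = (d A)\<^sup>\<dagger>"
    and perm: "is_permutation C A (\<delta> A) (\<gamma> A) (star A) (\<delta> (star A)) (\<gamma> (star A)) (d A)" for A
    using assms(1) unfolding dagger_compact_with_bases_def by auto
  have eps: "eps A = frobenius_cap (\<delta> A) (\<gamma> A) \<cdot> (idm A \<otimes> (d A)\<^sup>\<dagger>)" for A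
    using frobenius_typing[OF frob] d(1)
    unfolding assms(2) frobenius_cap_def c_hom_def by (simp add: assoc)
  have compact: "dagger_compact_structure C A (star A) (eps A)" for A
    unfolding eps using twisted_cap_compact_structure[OF frobenius_cap_hom
        frobenius_cap_symmetric frobenius_cap_snake d] frob by blast
  have swap: "eps (star A) = eps A \<cdot> \<sigma> (star A) A" for A
    using permutation_twisted_cap_swap[OF frob frob perm, of A] d(1)
    unfolding eps dual(2) c_hom_def by (simp add: dual(1))
  show ?thesis
    using compact swap smc unfolding dagger_compact_category_def by blast
qed

end
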